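(* Let $f:\mathbb{R}^d\to\mathbb{R}$, let $h:\mathbb{R}^d\to\mathbb{R}\cup\{+\infty\}$, and let $g:\mathbb{R}^d\to\mathbb{R}$ be $l$-Lipschitz continuous. Let $\lambda>0$, and suppose that for every $w$ the minimum of $x\mapsto\frac{1}{2\lambda}\|w-x\|_2^2+g(x)$ is attained; let $e_\lambda g(w)=\min_x\left(\frac{1}{2\lambda}\|w-x\|_2^2+g(x)\right)$. Let $\Phi=f+g+h$ and $\tilde\Phi_\lambda=f+e_\lambda g+h$. Let $w^*$ be a global minimizer of $\Phi$ and $w^*_\lambda$ a global minimizer of $\tilde\Phi_\lambda$. Then for all $w$ (with $\Phi(w)$ finite), $$\tilde\Phi_\lambda(w)-\tilde\Phi_\lambda(w^*_\lambda)\le\Phi(w)-\Phi(w^* )+\frac{l^2\lambda}{2}.$$ *)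

theory Defs
  imports "HOL-Analysis.Analysis" "HOL-Library.Extended_Real"
begin

text \<open>Moreau envelope e_lam g (w) = inf over x of (1/(2 lam)) norm(w - x)^2 + g x;
  under the attainment hypothesis of the theorem this infimum is a minimum.\<close>
definition moreau_env :: "real \<Rightarrow> ('a::real_normed_vector \<Rightarrow> real) \<Rightarrow> 'a \<Rightarrow> real" where
  "moreau_env lam g w = (INF x. (norm (w - x))\<^sup>2 / (2 * lam) + g x)"

end

theory Submission
  imports Defs
begin

(* Lipschitz continuity makes the quadratic penalty dominate:
   g w - g x <= l |w - x| <= |w - x|^2 / (2 lam) + l^2 lam / 2, so g - l^2 lam / 2 <= e_lam g <= g.
   Comparing the two objectives at the two minimizers then gives the bound; h only has to be
   finite at w, and then it is finite at both minimizers as well. *)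

lemma moreau_env_eq_minimizer:
  fixes g :: "'a::real_normed_vector \<Rightarrow> real"
  assumes "\<And>y. (norm (w - x))\<^sup>2 / (2 * lam) + g x \<le> (norm (w - y))\<^sup>2 / (2 * lam) + g y"
  shows "moreau_env lam g w = (norm (w - x))\<^sup>2 / (2 * lam) + g x"
proof -
  have "bdd_below (range (\<lambda>y. (norm (w - y))\<^sup>2 / (2 * lam) + g y))"
    using assms by (intro bdd_belowI2) auto
  then show ?thesis
    unfolding moreau_env_def
    by (intro antisym cINF_lower cINF_greatest assms) auto
qed

lemma linear_le_quadratic_plus:
  fixes t l lam :: real
  assumes "lam > 0"
  shows "l * t \<le> t\<^sup>2 / (2 * lam) + l\<^sup>2 * lam / 2"
proof -
  have "0 \<le> (t - l * lam)\<^sup>2 / (2 * lam)" using assms by simp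
  also have "\<dots> = t\<^sup>2 / (2 * lam) + l\<^sup>2 * lam / 2 - l * t"
    using assms by (simp add: field_simps power2_eq_square)
  finally show ?thesis by simp
qed

lemma moreau_env_bounds:
  fixes g :: "'a::real_normed_vector \<Rightarrow> real"
  assumes lip: "lipschitz_on l UNIV g" and lam_pos: "lam > 0"
    and attained: "\<exists>x. \<forall>y. (norm (w - x))\<^sup>2 / (2 * lam) + g x \<le> (norm (w - y))\<^sup>2 / (2 * lam) + g y"
  shows moreau_env_le: "moreau_env lam g w \<le> g w"
    and moreau_env_ge: "g w - l\<^sup>2 * lam / 2 \<le> moreau_env lam g w"
proof -
  obtain x where x: "\<And>y. (norm (w - x))\<^sup>2 / (2 * lam) + g x \<le> (norm (w - y))\<^sup>2 / (2 * lam) + g y"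
    using attained by blast
  note env = moreau_env_eq_minimizer[OF x]
  show "moreau_env lam g w \<le> g w"
    using x[of w] by (simp add: env)
  have "g w - g x \<le> l * norm (w - x)"
    using lip by (fastforce simp: lipschitz_on_def dist_norm abs_le_iff)
  then show "g w - l\<^sup>2 * lam / 2 \<le> moreau_env lam g w"
    using linear_le_quadratic_plus[OF lam_pos, of l "norm (w - x)"] by (simp add: env)
qed

lemma ereal_finite_summand:
  assumes "ereal r + e \<noteq> \<infinity>" and "e \<noteq> -\<infinity>"
  obtains c where "e = ereal c"
  using assms by (cases e) auto

theorem mainTheorem4:
  fixes f g :: "'a::euclidean_space \<Rightarrow> real"
    and h :: "'a \<Rightarrow> ereal"
    and l lam :: real
    and wstar wstar_lam w :: 'a
  assumes h_range: "\<And>x. h x \<noteq> -\<infinity>"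
    and lip: "lipschitz_on l UNIV g"
    and lam_pos: "lam > 0"
    and attained: "\<And>w. \<exists>x. \<forall>y. (norm (w - x))\<^sup>2 / (2 * lam) + g x \<le> (norm (w - y))\<^sup>2 / (2 * lam) + g y"
    and wstar_min: "\<And>v. ereal (f wstar + g wstar) + h wstar \<le> ereal (f v + g v) + h v"
    and wstar_lam_min: "\<And>v. ereal (f wstar_lam + moreau_env lam g wstar_lam) + h wstar_lam
                              \<le> ereal (f v + moreau_env lam g v) + h v"
    and w_fin: "ereal (f w + g w) + h w \<noteq> \<infinity>"
  shows "(ereal (f w + moreau_env lam g w) + h w) - (ereal (f wstar_lam + moreau_env lam g wstar_lam) + h wstar_lam)
         \<le> (ereal (f w + g w) + h w) - (ereal (f wstar + g wstar) + h wstar) + ereal (l\<^sup>2 * lam / 2)"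
proof -
  obtain a where a: "h w = ereal a"
    using w_fin h_range by (rule ereal_finite_summand)
  obtain b where b: "h wstar = ereal b"
  proof (rule ereal_finite_summand)
    show "ereal (f wstar + g wstar) + h wstar \<noteq> \<infinity>"
      using wstar_min[of w] w_fin by auto
  qed (rule h_range)
  obtain c where c: "h wstar_lam = ereal c"
  proof (rule ereal_finite_summand)
    show "ereal (f wstar_lam + moreau_env lam g wstar_lam) + h wstar_lam \<noteq> \<infinity>"
      using wstar_lam_min[of w] a by auto
  qed (rule h_range)
  have "f wstar + g wstar + b \<le> f wstar_lam + g wstar_lam + c"
    using wstar_min[of wstar_lam] b c by simp
  moreover have "f wstar_lam + moreau_env lam g wstar_lam + c \<le> f w + moreau_env lam g w + a"
    using wstar_lam_min[of w] a c by simp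
  moreover note moreau_env_le[OF lip lam_pos attained, of w]
    moreau_env_ge[OF lip lam_pos attained, of wstar_lam]
  ultimately show ?thesis
    using a b c by simp
qed

end
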